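(* Let $f$ be a $C^\infty$ function on $\mathbb R$ with no flat zero, i.e. for every $x$ with $f(x)=0$ there exists $r\in\mathbb N$ with $f^{(r)}(x)\neq0$. Let $F$ be a $C^1$ function on $\mathbb R$ with $\lim_{x\to-\infty}F(x)=-1$ and $\lim_{x\to+\infty}F(x)=1$. Let $a<b$ with $f(a)f(b)\neq0$. Then the number of zeros of $f$ in $[a,b]$ (counted without multiplicity) is finite and $$\mathcal H^0(\{f=0\}\cap[a,b])=\frac12\Big[F\Big(\frac{f'}{f}(b)\Big)-F\Big(\frac{f'}{f}(a)\Big)-\int_a^bF'\Big(\frac{f'(x)}{f(x)}\Big)\Big(\frac{f'(x)}{f(x)}\Big)'dx\Big],$$ where the integrand is defined where $f(x)\neq0$ and the integral is the sum of the (improper) integrals over the open intervals of $[a,b]$ between consecutive zeros of $f$.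
   Context: $\mathcal H^0(\{f=0\}\cap[a,b])$ denotes the number of distinct zeros of $f$ in $[a,b]$. *)

theory Defs
  imports "HOL-Analysis.Analysis"
begin

definition improper_integral_open :: "(real \<Rightarrow> real) \<Rightarrow> real \<Rightarrow> real \<Rightarrow> real \<Rightarrow> bool" where
  "improper_integral_open h c d I \<longleftrightarrow>
     (\<forall>s t. c < s \<and> s \<le> t \<and> t < d \<longrightarrow> h integrable_on {s..t}) \<and>
     ((\<lambda>(s, t). integral {s..t} h) \<longlongrightarrow> I) (at_right c \<times>\<^sub>F at_left d)"

definition split_improper_integral ::
  "(real \<Rightarrow> real) \<Rightarrow> (real \<Rightarrow> real) \<Rightarrow> real \<Rightarrow> real \<Rightarrow> real \<Rightarrow> bool" where
  "split_improper_integral h f a b I \<longleftrightarrow>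
     (let p = sorted_list_of_set ({a, b} \<union> {x \<in> {a..b}. f x = 0}) in
      \<exists>Is :: real list. length Is = length p - 1 \<and>
        (\<forall>i < length p - 1. improper_integral_open h (p ! i) (p ! Suc i) (Is ! i)) \<and>
        I = sum_list Is)"

end

theory Submission
  imports Defs
begin

text \<open>Write \<open>L = f'/f\<close>. On each gap between consecutive zeros of \<open>f\<close> the function
  \<open>F \<circ> L\<close> is an antiderivative of the integrand, so the improper integral over the gap is
  the difference of the one-sided limits of \<open>F \<circ> L\<close> at its ends. At a zero \<open>c\<close> of finite
  order, repeated l'Hopital gives \<open>f/f' \<rightarrow> 0\<close>, while \<open>f f'\<close> is positive just right of \<open>c\<close>
  and negative just left of it; hence \<open>L \<rightarrow> +\<infinity>\<close> from the right and \<open>L \<rightarrow> -\<infinity>\<close> from the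
  left, so \<open>F \<circ> L\<close> jumps by \<open>1 - (-1) = 2\<close> across every zero and the sum of the integrals
  telescopes to \<open>F (L b) - F (L a) - 2 \<cdot> #zeros\<close>. The zeros are finite in number because
  they are isolated in the compact interval \<open>[a, b]\<close>.\<close>

lemma eventually_nonzero_at_zero_of_deriv_nonzero:
  fixes g g' :: "real \<Rightarrow> real"
  assumes g0: "g c = 0" and g': "\<And>x. (g has_real_derivative g' x) (at x)"
    and g'_nz: "eventually (\<lambda>x. g' x \<noteq> 0) (at c)"
  shows "eventually (\<lambda>x. g x \<noteq> 0) (at c)"
proof -
  from g'_nz obtain d where "d > 0" and d: "\<And>x. x \<noteq> c \<Longrightarrow> dist x c < d \<Longrightarrow> g' x \<noteq> 0"
    unfolding eventually_at by blast
  have "g x \<noteq> 0" if "x \<noteq> c" "dist x c < d" for x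
  proof -
    have "\<exists>z. min x c < z \<and> z < max x c \<and>
        g (max x c) - g (min x c) = (max x c - min x c) * g' z"
      using that by (intro MVT2) (auto intro: g')
    then obtain z where "min x c < z" "z < max x c"
      and "g (max x c) - g (min x c) = (max x c - min x c) * g' z" by blast
    moreover have "g' z \<noteq> 0"
      using d[of z] that \<open>min x c < z\<close> \<open>z < max x c\<close> by (auto simp: dist_real_def)
    ultimately show ?thesis
      using g0 that by (cases "x < c") (auto simp: min_def max_def)
  qed
  then show ?thesis unfolding eventually_at using \<open>d > 0\<close> by blast
qed

lemma iterated_deriv_eventually_nonzero:
  fixes D :: "nat \<Rightarrow> real \<Rightarrow> real"
  assumes D: "\<And>k x. (D k has_real_derivative D (Suc k) x) (at x)"
    and vanish: "\<And>k. k < m \<Longrightarrow> D k c = 0" and "D m c \<noteq> 0" and "j \<le> m"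
  shows "eventually (\<lambda>x. D j x \<noteq> 0) (at c)"
  using \<open>j \<le> m\<close>
proof (induction j rule: inc_induct)
  case base
  have "(D m \<longlongrightarrow> D m c) (at c)"
    using DERIV_isCont[OF D] by (simp add: isCont_def)
  then show ?case using \<open>D m c \<noteq> 0\<close> by (rule tendsto_imp_eventually_ne)
next
  case (step k)
  show ?case
    by (rule eventually_nonzero_at_zero_of_deriv_nonzero[OF vanish[OF step.hyps(2)] D step.IH])
qed

lemma iterated_deriv_ratio_tendsto_0:
  fixes D :: "nat \<Rightarrow> real \<Rightarrow> real"
  assumes D: "\<And>k x. (D k has_real_derivative D (Suc k) x) (at x)"
    and vanish: "\<And>k. k < m \<Longrightarrow> D k c = 0" and "D m c \<noteq> 0" and "j < m"
  shows "((\<lambda>x. D j x / D (Suc j) x) \<longlongrightarrow> 0) (at c)"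
proof -
  have lim: "(D k \<longlongrightarrow> D k c) (at c)" for k
    using DERIV_isCont[OF D] by (simp add: isCont_def)
  have "j \<le> m - 1" using \<open>j < m\<close> by simp
  then show ?thesis
  proof (induction j rule: inc_induct)
    case base
    have "((\<lambda>x. D (m - 1) x / D m x) \<longlongrightarrow> D (m - 1) c / D m c) (at c)"
      using \<open>D m c \<noteq> 0\<close> by (intro tendsto_divide lim)
    then show ?case using vanish[of "m - 1"] \<open>j < m\<close> by (simp add: Suc_diff_1)
  next
    case (step k)
    have "k < m" "Suc k < m" using step.hyps by auto
    show ?case
    proof (rule lhopital)
      show "(D k \<longlongrightarrow> 0) (at c)" "(D (Suc k) \<longlongrightarrow> 0) (at c)"
        using lim[of k] lim[of "Suc k"] vanish \<open>k < m\<close> \<open>Suc k < m\<close> by simp_all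
      show "eventually (\<lambda>x. D (Suc k) x \<noteq> 0) (at c)"
        and "eventually (\<lambda>x. D (Suc (Suc k)) x \<noteq> 0) (at c)"
        using \<open>Suc k < m\<close>
        by (auto intro: iterated_deriv_eventually_nonzero[OF D vanish \<open>D m c \<noteq> 0\<close>])
    qed (use step.IH D in auto)
  qed
qed

text \<open>Since \<open>g\<^sup>2\<close> grows from \<open>0\<close> at \<open>c\<close>, the mean value theorem makes \<open>g g' = (g\<^sup>2)'/2\<close>
  positive somewhere in every interval \<open>(c, y)\<close>; being continuous and nonvanishing on
  \<open>(c, b)\<close>, it cannot change sign there.\<close>
lemma mult_deriv_pos_at_right_of_zero:
  fixes g g' :: "real \<Rightarrow> real"
  assumes g0: "g c = 0" and g': "\<And>x. (g has_real_derivative g' x) (at x)"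
    and cont: "\<And>x. isCont g' x"
    and nz: "eventually (\<lambda>x. g x \<noteq> 0 \<and> g' x \<noteq> 0) (at_right c)"
  shows "eventually (\<lambda>x. g x * g' x > 0) (at_right c)"
proof -
  from nz obtain b where "b > c" and b: "\<And>y. c < y \<Longrightarrow> y < b \<Longrightarrow> g y \<noteq> 0 \<and> g' y \<noteq> 0"
    unfolding eventually_at_right_field by blast
  have "g y * g' y > 0" if y: "c < y" "y < b" for y
  proof (rule ccontr)
    assume "\<not> g y * g' y > 0"
    then have neg: "g y * g' y < 0" using b[OF y] by (simp add: linorder_not_less order_le_less)
    have "\<exists>z. c < z \<and> z < y \<and> g y * g y - g c * g c = (y - c) * (g' z * g z + g' z * g z)"
      by (rule MVT2[OF y(1)]) (rule DERIV_mult[OF g' g'])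
    then obtain z where z: "c < z" "z < y" and "g y * g y = (y - c) * (2 * (g z * g' z))"
      using g0 by (auto simp: algebra_simps)
    moreover have "g y * g y > 0" using b[OF y] by (metis not_real_square_gt_zero)
    ultimately have pos: "g z * g' z > 0" using y by (simp add: zero_less_mult_iff)
    have "\<exists>x\<ge>z. x \<le> y \<and> g x * g' x = 0"
      using neg pos z
      by (intro IVT2) (auto intro!: continuous_intros DERIV_isCont[OF g'] cont)
    then show False using b z y by force
  qed
  then show ?thesis unfolding eventually_at_right_field using \<open>b > c\<close> by blast
qed

lemma mult_deriv_neg_at_left_of_zero:
  fixes g g' :: "real \<Rightarrow> real"
  assumes g0: "g c = 0" and g': "\<And>x. (g has_real_derivative g' x) (at x)"
    and cont: "\<And>x. isCont g' x"
    and nz: "eventually (\<lambda>x. g x \<noteq> 0 \<and> g' x \<noteq> 0) (at_left c)"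
  shows "eventually (\<lambda>x. g x * g' x < 0) (at_left c)"
proof -
  have "eventually (\<lambda>x. g (- x) * - g' (- x) > 0) (at_right (- c))"
  proof (rule mult_deriv_pos_at_right_of_zero)
    show "((\<lambda>x. g (- x)) has_real_derivative - g' (- x)) (at x)" for x
      using g' DERIV_mirror by blast
    show "isCont (\<lambda>x. - g' (- x)) x" for x
      by (intro continuous_intros isCont_o2[OF _ cont])
  qed (use g0 nz in \<open>simp_all add: eventually_at_left_to_right\<close>)
  then show ?thesis by (simp add: eventually_at_left_to_right)
qed

lemma log_deriv_filterlim_at_zero:
  fixes g g' :: "real \<Rightarrow> real"
  assumes g0: "g c = 0" and g': "\<And>x. (g has_real_derivative g' x) (at x)"
    and cont: "\<And>x. isCont g' x"
    and nz: "eventually (\<lambda>x. g x \<noteq> 0 \<and> g' x \<noteq> 0) (at c)"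
    and ratio: "((\<lambda>x. g x / g' x) \<longlongrightarrow> 0) (at c)"
  shows "LIM x at_right c. g' x / g x :> at_top"
    and "LIM x at_left c. g' x / g x :> at_bot"
proof -
  have "eventually (\<lambda>x. g x * g' x > 0) (at_right c)"
    using nz by (intro mult_deriv_pos_at_right_of_zero[OF g0 g' cont]) (simp add: eventually_at_split)
  moreover have "((\<lambda>x. g x / g' x) \<longlongrightarrow> 0) (at_right c)"
    using ratio by (rule filterlim_mono) (simp_all add: at_within_le_at)
  ultimately have "LIM x at_right c. inverse (g x / g' x) :> at_top"
    by (intro filterlim_inverse_at_top)
      (auto elim: eventually_mono simp: zero_less_divide_iff zero_less_mult_iff)
  then show "LIM x at_right c. g' x / g x :> at_top" by simp
  have "eventually (\<lambda>x. g x * g' x < 0) (at_left c)"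
    using nz by (intro mult_deriv_neg_at_left_of_zero[OF g0 g' cont]) (simp add: eventually_at_split)
  moreover have "((\<lambda>x. g x / g' x) \<longlongrightarrow> 0) (at_left c)"
    using ratio by (rule filterlim_mono) (simp_all add: at_within_le_at)
  ultimately have "LIM x at_left c. inverse (g x / g' x) :> at_bot"
    by (intro filterlim_inverse_at_bot)
      (auto elim: eventually_mono simp: divide_less_0_iff mult_less_0_iff)
  then show "LIM x at_left c. g' x / g x :> at_bot" by simp
qed

lemma finite_zeros_if_isolated:
  fixes f :: "'a::topological_space \<Rightarrow> 'b::zero"
  assumes "compact K" and "\<And>x. x \<in> K \<Longrightarrow> eventually (\<lambda>y. f y \<noteq> 0) (at x)"
  shows "finite {x \<in> K. f x = 0}"
proof -
  have "\<not> x islimpt {x. f x = 0}" if "x \<in> K" for x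
    using assms(2)[OF that] by (simp add: islimpt_iff_eventually)
  then have "finite (K \<inter> {x. f x = 0})"
    using \<open>compact K\<close> by (rule finite_not_islimpt_in_compact[rotated])
  moreover have "{x \<in> K. f x = 0} = K \<inter> {x. f x = 0}" by blast
  ultimately show ?thesis by simp
qed

context
  fixes f :: "real \<Rightarrow> real"
  assumes smooth: "\<And>k x. ((deriv ^^ k) f) differentiable (at x)"
begin

lemma has_real_derivative_iterated_deriv:
  "((deriv ^^ k) f has_real_derivative (deriv ^^ Suc k) f x) (at x)"
  using smooth[of k x] by (simp add: DERIV_deriv_iff_real_differentiable)

lemma nonflat_zero_log_deriv_filterlim:
  assumes "f c = 0" and "\<exists>r. (deriv ^^ r) f c \<noteq> 0"
  shows "eventually (\<lambda>x. f x \<noteq> 0) (at c)"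
    and "LIM x at_right c. deriv f x / f x :> at_top"
    and "LIM x at_left c. deriv f x / f x :> at_bot"
proof -
  define m where "m = (LEAST r. (deriv ^^ r) f c \<noteq> 0)"
  have Dm: "(deriv ^^ m) f c \<noteq> 0"
    unfolding m_def using assms(2) by (rule LeastI_ex)
  have vanish: "(deriv ^^ k) f c = 0" if "k < m" for k
    using not_less_Least[of k "\<lambda>r. (deriv ^^ r) f c \<noteq> 0"] that by (simp add: m_def)
  have "m > 0" using Dm \<open>f c = 0\<close> by (cases m) auto
  note D = has_real_derivative_iterated_deriv
  have nz: "eventually (\<lambda>x. f x \<noteq> 0 \<and> deriv f x \<noteq> 0) (at c)"
    using iterated_deriv_eventually_nonzero[OF D vanish Dm, of 0]
      iterated_deriv_eventually_nonzero[OF D vanish Dm, of 1] \<open>m > 0\<close>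
    by (simp add: eventually_conj_iff)
  then show "eventually (\<lambda>x. f x \<noteq> 0) (at c)" by (rule eventually_mono) simp
  have ratio: "((\<lambda>x. f x / deriv f x) \<longlongrightarrow> 0) (at c)"
    using iterated_deriv_ratio_tendsto_0[OF D vanish Dm \<open>m > 0\<close>] by simp
  have f': "(f has_real_derivative deriv f x) (at x)" for x
    using D[of 0] by simp
  have "isCont (deriv f) x" for x
    using DERIV_isCont[OF D[of 1]] by simp
  from log_deriv_filterlim_at_zero[OF \<open>f c = 0\<close> f' this nz ratio]
  show "LIM x at_right c. deriv f x / f x :> at_top"
    and "LIM x at_left c. deriv f x / f x :> at_bot" .
qed

lemma finite_zeros_if_no_flat_zero:
  assumes "\<And>x. f x = 0 \<Longrightarrow> \<exists>r. (deriv ^^ r) f x \<noteq> 0"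
  shows "finite {x \<in> {a..b}. f x = 0}"
proof (rule finite_zeros_if_isolated[OF compact_Icc])
  fix x
  show "eventually (\<lambda>y. f y \<noteq> 0) (at x)"
  proof (cases "f x = 0")
    case True
    show ?thesis by (rule nonflat_zero_log_deriv_filterlim(1)[OF True assms[OF True]])
  next
    case False
    have "isCont f x" using DERIV_isCont[OF has_real_derivative_iterated_deriv[of 0]] by simp
    then show ?thesis using False by (simp add: isCont_def tendsto_imp_eventually_ne)
  qed
qed

lemma log_deriv_has_real_derivative:
  assumes "f x \<noteq> 0"
  shows "((\<lambda>y. deriv f y / f y) has_real_derivative deriv (\<lambda>y. deriv f y / f y) x) (at x)"
proof -
  have "((\<lambda>y. deriv f y / f y) has_real_derivative
      ((deriv ^^ 2) f x * f x - deriv f x * deriv f x) / (f x * f x)) (at x)"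
    using has_real_derivative_iterated_deriv[of 1 x] has_real_derivative_iterated_deriv[of 0 x] assms
    by (intro DERIV_divide) (simp_all add: numeral_2_eq_2)
  then show ?thesis
    using DERIV_deriv_iff_real_differentiable real_differentiable_def by blast
qed

end

lemma improper_integral_open_of_antiderivative:
  fixes G h :: "real \<Rightarrow> real"
  assumes "c < d"
    and G': "\<And>x. c < x \<Longrightarrow> x < d \<Longrightarrow> (G has_real_derivative h x) (at x)"
    and left: "(G \<longlongrightarrow> Gc) (at_right c)" and right: "(G \<longlongrightarrow> Gd) (at_left d)"
  shows "improper_integral_open h c d (Gd - Gc)"
proof -
  have integral: "(h has_integral G t - G s) {s..t}" if "c < s" "s \<le> t" "t < d" for s t
  proof (rule fundamental_theorem_of_calculus)
    show "s \<le> t" by fact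
    fix x assume "x \<in> {s..t}"
    then have "(G has_real_derivative h x) (at x within {s..t})"
      using that by (intro has_field_derivative_at_within[OF G']) auto
    then show "(G has_vector_derivative h x) (at x within {s..t})"
      by (simp add: has_real_derivative_iff_has_vector_derivative)
  qed
  let ?m = "(c + d) / 2"
  have "eventually (\<lambda>s. c < s \<and> s < ?m) (at_right c)"
    using \<open>c < d\<close> unfolding eventually_at_right_field by (intro exI[of _ ?m]) auto
  moreover have "eventually (\<lambda>t. ?m < t \<and> t < d) (at_left d)"
    using \<open>c < d\<close> unfolding eventually_at_left_field by (intro exI[of _ ?m]) auto
  ultimately have "eventually (\<lambda>p. (\<lambda>(s, t). G t - G s) p = (\<lambda>(s, t). integral {s..t} h) p)
      (at_right c \<times>\<^sub>F at_left d)"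
    by (rule eventually_mono[OF eventually_prodI])
      (auto intro!: integral_unique[symmetric] integral)
  moreover have "((\<lambda>(s, t). G t - G s) \<longlongrightarrow> Gd - Gc) (at_right c \<times>\<^sub>F at_left d)"
    unfolding case_prod_beta
    by (intro tendsto_diff filterlim_compose[OF right filterlim_snd]
        filterlim_compose[OF left filterlim_fst])
  ultimately have "((\<lambda>(s, t). integral {s..t} h) \<longlongrightarrow> Gd - Gc) (at_right c \<times>\<^sub>F at_left d)"
    by (rule tendsto_cong[THEN iffD1])
  then show ?thesis
    unfolding improper_integral_open_def using integral by blast
qed

lemma sorted_wrt_less_nth_gap:
  fixes xs :: "'a::linorder list"
  assumes "sorted_wrt (<) xs" and "Suc i < length xs" and "xs ! i < x" and "x < xs ! Suc i"
  shows "x \<notin> set xs"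
proof
  assume "x \<in> set xs"
  then obtain k where k: "k < length xs" "xs ! k = x" by (auto simp: in_set_conv_nth)
  have "sorted xs" using assms(1) by (simp add: sorted_wrt_mono_rel[of _ "(<)" "(\<le>)"])
  then show False
    using sorted_nth_mono[of xs k i] sorted_nth_mono[of xs "Suc i" k] assms k
    by (cases "k \<le> i") auto
qed

lemma hd_last_sorted_list_of_set:
  fixes S :: "'a::linorder set"
  assumes "finite S" and "a \<in> S" and "b \<in> S" and "S \<subseteq> {a..b}"
  shows "hd (sorted_list_of_set S) = a" and "last (sorted_list_of_set S) = b"
proof -
  let ?p = "sorted_list_of_set S"
  have p: "set ?p = S" "sorted ?p" "?p \<noteq> []" using assms by auto
  obtain i where "i < length ?p" "?p ! i = a"
    using \<open>a \<in> S\<close> p(1) in_set_conv_nth[of a ?p] by blast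
  moreover obtain j where "j < length ?p" "?p ! j = b"
    using \<open>b \<in> S\<close> p(1) in_set_conv_nth[of b ?p] by blast
  moreover from this have "j \<le> length ?p - 1" by simp
  moreover have "hd ?p \<in> {a..b}" "last ?p \<in> {a..b}"
    using hd_in_set[OF p(3)] last_in_set[OF p(3)] p(1) assms(4) by auto
  ultimately show "hd ?p = a" "last ?p = b"
    using sorted_nth_mono[OF p(2), of 0 i] sorted_nth_mono[OF p(2), of j "length ?p - 1"] p(3)
    by (simp_all add: hd_conv_nth last_conv_nth)
qed

lemma sum_adjacent_diff_nth:
  fixes \<phi> \<psi> :: "'a \<Rightarrow> 'b::ab_group_add"
  assumes "distinct xs" and "xs \<noteq> []"
  shows "(\<Sum>i<length xs - 1. \<phi> (xs ! Suc i) - \<psi> (xs ! i))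
    = (\<Sum>x\<in>set xs. \<phi> x - \<psi> x) - \<phi> (hd xs) + \<psi> (last xs)"
proof -
  obtain m where m: "length xs = Suc m" using \<open>xs \<noteq> []\<close> by (cases xs) auto
  have set_sum: "(\<Sum>x\<in>set xs. u x) = (\<Sum>i<Suc m. u (xs ! i))" for u :: "'a \<Rightarrow> 'b"
    using \<open>distinct xs\<close> m
    by (simp add: sum_list_distinct_conv_sum_set[symmetric] sum_list_sum_nth atLeast0LessThan)
  have "(\<Sum>i<Suc m. \<phi> (xs ! i)) = \<phi> (xs ! 0) + (\<Sum>i<m. \<phi> (xs ! Suc i))"
    by (rule sum.lessThan_Suc_shift)
  moreover have "(\<Sum>i<Suc m. \<psi> (xs ! i)) = (\<Sum>i<m. \<psi> (xs ! i)) + \<psi> (xs ! m)"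
    by (rule sum.lessThan_Suc)
  ultimately show ?thesis
    using \<open>xs \<noteq> []\<close> unfolding set_sum m sum_subtractf
    by (simp add: hd_conv_nth last_conv_nth m)
qed

lemma split_improper_integral_jump_formula:
  fixes f G h Gr Gl :: "real \<Rightarrow> real"
  assumes "a \<le> b" and "f a \<noteq> 0" and "f b \<noteq> 0"
    and finite: "finite {x \<in> {a..b}. f x = 0}"
    and G': "\<And>x. x \<in> {a..b} \<Longrightarrow> f x \<noteq> 0 \<Longrightarrow> (G has_real_derivative h x) (at x)"
    and right: "\<And>z. z \<in> {a..b} \<Longrightarrow> f z = 0 \<Longrightarrow> (G \<longlongrightarrow> Gr z) (at_right z)"
    and left: "\<And>z. z \<in> {a..b} \<Longrightarrow> f z = 0 \<Longrightarrow> (G \<longlongrightarrow> Gl z) (at_left z)"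
  shows "split_improper_integral h f a b
    (G b - G a - (\<Sum>z\<in>{x \<in> {a..b}. f x = 0}. Gr z - Gl z))"
proof -
  define Z where "Z = {x \<in> {a..b}. f x = 0}"
  define S where "S = {a, b} \<union> Z"
  define p where "p = sorted_list_of_set S"
  define Gright where "Gright x = (if f x = 0 then Gr x else G x)" for x
  define Gleft where "Gleft x = (if f x = 0 then Gl x else G x)" for x
  have "finite S" "S \<subseteq> {a..b}" using finite \<open>a \<le> b\<close> by (auto simp: S_def Z_def)
  moreover have "S \<noteq> {}" by (simp add: S_def)
  ultimately have p: "set p = S" "sorted_wrt (<) p" "distinct p" "p \<noteq> []"
    by (auto simp: p_def)
  have ends: "hd p = a" "last p = b"
    using hd_last_sorted_list_of_set[OF \<open>finite S\<close> _ _ \<open>S \<subseteq> {a..b}\<close>]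
    by (auto simp: p_def S_def)
  have G_at: "(G \<longlongrightarrow> G x) (at x)" if "x \<in> S" "f x \<noteq> 0" for x
    using DERIV_isCont[OF G'] that \<open>S \<subseteq> {a..b}\<close> by (auto simp: isCont_def)
  have lim_right: "(G \<longlongrightarrow> Gright x) (at_right x)" if "x \<in> S" for x
    using right[of x] G_at[OF that] that \<open>S \<subseteq> {a..b}\<close>
    by (auto simp: Gright_def intro: filterlim_mono at_within_le_at)
  have lim_left: "(G \<longlongrightarrow> Gleft x) (at_left x)" if "x \<in> S" for x
    using left[of x] G_at[OF that] that \<open>S \<subseteq> {a..b}\<close>
    by (auto simp: Gleft_def intro: filterlim_mono at_within_le_at)
  define Is where "Is = map (\<lambda>i. Gleft (p ! Suc i) - Gright (p ! i)) [0..<length p - 1]"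
  have "improper_integral_open h (p ! i) (p ! Suc i) (Is ! i)" if "i < length p - 1" for i
  proof -
    have i: "Suc i < length p" using that by simp
    have ends_in_S: "p ! i \<in> S" "p ! Suc i \<in> S" using i p(1) nth_mem by (metis Suc_lessD)+
    have gap: "x \<in> {a..b} \<and> f x \<noteq> 0" if "p ! i < x" "x < p ! Suc i" for x
      using sorted_wrt_less_nth_gap[OF p(2) i that] ends_in_S \<open>S \<subseteq> {a..b}\<close> that p(1)
      by (fastforce simp: S_def Z_def)
    have "p ! i < p ! Suc i" using sorted_wrt_nth_less[OF p(2)] i by simp
    then show ?thesis
      using i gap by (auto simp: Is_def intro!: improper_integral_open_of_antiderivative G'
          lim_right lim_left ends_in_S)
  qed
  moreover have "sum_list Is = G b - G a - (\<Sum>z\<in>Z. Gr z - Gl z)"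
  proof -
    have "sum_list Is = (\<Sum>i<length p - 1. Gleft (p ! Suc i) - Gright (p ! i))"
      by (simp add: Is_def interv_sum_list_conv_sum_set_nat atLeast0LessThan)
    also have "\<dots> = (\<Sum>x\<in>S. Gleft x - Gright x) - Gleft a + Gright b"
      using sum_adjacent_diff_nth[OF p(3,4)] by (simp add: p(1) ends)
    also have "(\<Sum>x\<in>S. Gleft x - Gright x) = (\<Sum>z\<in>Z. Gl z - Gr z)"
      using \<open>finite S\<close> \<open>a \<le> b\<close>
      by (intro sum.mono_neutral_cong_right) (auto simp: S_def Z_def Gleft_def Gright_def)
    finally show ?thesis
      using \<open>f a \<noteq> 0\<close> \<open>f b \<noteq> 0\<close> by (simp add: Gleft_def Gright_def sum_subtractf)
  qed
  ultimately show ?thesis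
    unfolding split_improper_integral_def Let_def Z_def[symmetric] S_def[symmetric] p_def[symmetric]
    by (intro exI[of _ Is]) (simp add: Is_def)
qed

theorem proposition4:
  fixes f F :: "real \<Rightarrow> real" and a b :: real
  assumes f_smooth: "\<And>k x. ((deriv ^^ k) f) differentiable (at x)"
    and no_flat_zero: "\<And>x. f x = 0 \<Longrightarrow> \<exists>r::nat. (deriv ^^ r) f x \<noteq> 0"
    and F_diff: "\<And>x. F differentiable (at x)"
    and F_C1: "continuous_on UNIV (deriv F)"
    and F_bot: "(F \<longlongrightarrow> -1) at_bot"
    and F_top: "(F \<longlongrightarrow> 1) at_top"
    and ab: "a < b"
    and fab: "f a * f b \<noteq> 0"
  shows "finite {x \<in> {a..b}. f x = 0} \<and>
    (\<exists>I. split_improper_integral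
            (\<lambda>x. deriv F (deriv f x / f x) * deriv (\<lambda>y. deriv f y / f y) x) f a b I \<and>
          real (card {x \<in> {a..b}. f x = 0}) =
            1/2 * (F (deriv f b / f b) - F (deriv f a / f a) - I))"
proof -
  let ?Z = "{x \<in> {a..b}. f x = 0}"
  let ?L = "\<lambda>x. deriv f x / f x"
  have "finite ?Z" using finite_zeros_if_no_flat_zero[OF f_smooth no_flat_zero] .
  have F': "(F has_real_derivative deriv F y) (at y)" for y
    using F_diff by (simp add: DERIV_deriv_iff_real_differentiable)
  have "split_improper_integral (\<lambda>x. deriv F (?L x) * deriv ?L x) f a b
    (F (?L b) - F (?L a) - (\<Sum>z\<in>?Z. 1 - (-1)))"
  proof (rule split_improper_integral_jump_formula)
    show "((\<lambda>x. F (?L x)) has_real_derivative deriv F (?L x) * deriv ?L x) (at x)"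
      if "f x \<noteq> 0" for x
      using DERIV_chain2[OF F' log_deriv_has_real_derivative[OF f_smooth that]] .
    show "((\<lambda>x. F (?L x)) \<longlongrightarrow> 1) (at_right z)" if "f z = 0" for z
      using filterlim_compose[OF F_top
          nonflat_zero_log_deriv_filterlim(2)[OF f_smooth that no_flat_zero[OF that]]] .
    show "((\<lambda>x. F (?L x)) \<longlongrightarrow> -1) (at_left z)" if "f z = 0" for z
      using filterlim_compose[OF F_bot
          nonflat_zero_log_deriv_filterlim(3)[OF f_smooth that no_flat_zero[OF that]]] .
  qed (use ab fab \<open>finite ?Z\<close> in auto)
  then show ?thesis using \<open>finite ?Z\<close> by auto
qed

end
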